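(* Let $m\ge3$, $\theta\in(0,1]$, and let $\hat P$ be the expected normalized profile. Candidate $1$ wins under the Two-Round System in $\hat P$. If $\theta>\frac{m-3}{5m-3}$, the Two-Round System is not CM in $\hat P$ (and not CM in any continuous profile of some neighborhood of $\hat P$). If $\theta<\frac{m-3}{5m-3}$, it is CM in $\hat P$; more precisely, the profile $Q$ obtained from $\hat P$ by reassigning the total weight $\frac{1-\theta}{2}$ of rankings preferring $2$ to $1$ so that a fraction $\frac{2(1-2\theta)}{3(1-\theta)}$ of it goes to ranking $2\succ3\succ\cdots\succ m\succ1$ and a fraction $\frac{1+\theta}{3(1-\theta)}$ goes to ranking $3\succ4\succ\cdots\succ m\succ1\succ2$ has candidate $2$ as Two-Round winner.
   Context: A ranking is a strict total order on $\{1,\dots,m\}$. A continuous profile consists of the candidate set, total weight $w(P)>0$ and weights $w(p,P)\ge 0$ for each ranking $p$ summing to $w(P)$; profiles are identified with weight vectors in $\mathbb R^{m!}$. For a candidate set $K$, $P_K$ restricts each ranking to $K$ (aggregating weights). Plurality score $s_{\mathrm{Plu}}(c,P)$: total weight of rankings placing $c$ first. Two-Round System: the two candidates with highest Plurality scores in $P$ form $K$, and the winner is the one with higher Plurality score in $P_K$; ties broken by an arbitrary fixed rule. CM (continuous): a rule $f$ is CM in $P$ if there is a continuous profile $Q$ with the same candidates and total weight, $f(Q)\ne f(P)$, and every ranking $p$ with $w(p,Q)<w(p,P)$ prefers $f(Q)$ to $f(P)$. Expected normalized profile $\hat P$: total weight $1$, weight $\theta+\frac{1-\theta}{m!}$ on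 $1\succ\cdots\succ m$ and $\frac{1-\theta}{m!}$ on each other ranking. *)

theory Defs
  imports Complex_Main "HOL-Combinatorics.Multiset_Permutations"
begin

text \<open>Candidates are 1..m. A ranking is a list enumerating {1..m} without
repetition, best candidate first.\<close>

definition rankings :: "nat \<Rightarrow> nat list set" where
  "rankings m = permutations_of_set {1..m}"

definition prefers :: "nat list \<Rightarrow> nat \<Rightarrow> nat \<Rightarrow> bool" where
  "prefers p a b \<longleftrightarrow> (\<exists>i j. i < j \<and> j < length p \<and> p ! i = a \<and> p ! j = b)"

definition total :: "nat \<Rightarrow> (nat list \<Rightarrow> real) \<Rightarrow> real" where
  "total m P = (\<Sum>p\<in>rankings m. P p)"

definition is_profile :: "nat \<Rightarrow> (nat list \<Rightarrow> real) \<Rightarrow> bool" where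
  "is_profile m P \<longleftrightarrow> (\<forall>p. 0 \<le> P p) \<and> (\<forall>p. p \<notin> rankings m \<longrightarrow> P p = 0) \<and> total m P > 0"

definition restr :: "nat \<Rightarrow> nat set \<Rightarrow> (nat list \<Rightarrow> real) \<Rightarrow> nat list \<Rightarrow> real" where
  "restr m K P q = (\<Sum>p\<in>{p\<in>rankings m. filter (\<lambda>x. x \<in> K) p = q}. P p)"

definition plu :: "nat list set \<Rightarrow> (nat list \<Rightarrow> real) \<Rightarrow> nat \<Rightarrow> real" where
  "plu R P c = (\<Sum>p\<in>{p\<in>R. hd p = c}. P p)"

text \<open>Fixed tie-breaking rule: a strict total order on candidates, given as a ranking tb;
among equal scores, the candidate ranked earlier in tb is preferred.
beats s tb c d: c is ahead of d w.r.t. score s with ties broken by tb.\<close>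
definition beats :: "(nat \<Rightarrow> real) \<Rightarrow> nat list \<Rightarrow> nat \<Rightarrow> nat \<Rightarrow> bool" where
  "beats s tb c d \<longleftrightarrow> s c > s d \<or> (s c = s d \<and> prefers tb c d)"

definition first_cand :: "nat \<Rightarrow> nat list \<Rightarrow> (nat list \<Rightarrow> real) \<Rightarrow> nat" where
  "first_cand m tb P = (THE c. c \<in> {1..m} \<and>
      (\<forall>d\<in>{1..m}. d \<noteq> c \<longrightarrow> beats (plu (rankings m) P) tb c d))"

definition second_cand :: "nat \<Rightarrow> nat list \<Rightarrow> (nat list \<Rightarrow> real) \<Rightarrow> nat" where
  "second_cand m tb P = (THE c. c \<in> {1..m} \<and> c \<noteq> first_cand m tb P \<and>
      (\<forall>d\<in>{1..m}. d \<noteq> c \<and> d \<noteq> first_cand m tb P \<longrightarrow> beats (plu (rankings m) P) tb c d))"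

definition trs :: "nat \<Rightarrow> nat list \<Rightarrow> (nat list \<Rightarrow> real) \<Rightarrow> nat" where
  "trs m tb P = (let a = first_cand m tb P; b = second_cand m tb P; K = {a, b};
                     s = plu (permutations_of_set K) (restr m K P)
                 in if beats s tb a b then a else b)"

definition CM :: "nat \<Rightarrow> nat list \<Rightarrow> (nat list \<Rightarrow> real) \<Rightarrow> bool" where
  "CM m tb P \<longleftrightarrow> (\<exists>Q. is_profile m Q \<and> total m Q = total m P \<and> trs m tb Q \<noteq> trs m tb P \<and>
      (\<forall>p\<in>rankings m. Q p < P p \<longrightarrow> prefers p (trs m tb Q) (trs m tb P)))"

definition hatP :: "nat \<Rightarrow> real \<Rightarrow> nat list \<Rightarrow> real" where
  "hatP m \<theta> p = (if p \<in> rankings m then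
      (if p = [1..<m+1] then \<theta> + (1 - \<theta>) / fact m else (1 - \<theta>) / fact m) else 0)"

definition manipQ :: "nat \<Rightarrow> real \<Rightarrow> nat list \<Rightarrow> real" where
  "manipQ m \<theta> p =
     (if prefers p 2 1 then 0 else hatP m \<theta> p)
     + (if p = 2 # [3..<m+1] @ [1] then (1 - \<theta>) / 2 * (2 * (1 - 2 * \<theta>) / (3 * (1 - \<theta>))) else 0)
     + (if p = [3..<m+1] @ [1, 2] then (1 - \<theta>) / 2 * ((1 + \<theta>) / (3 * (1 - \<theta>))) else 0)"

end

theory Submission
  imports Defs
begin

text \<open>
  In \<open>hatP m \<theta>\<close> candidate 1 leads every plurality score by \<open>\<theta>\<close> and is preferred to any rival
  by weight \<open>(1 + \<theta>)/2\<close>; all weights are computed by counting rankings, using that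
  transpositions of candidates permute the rankings. These strict inequalities survive small
  perturbations, so 1 wins near \<open>hatP m \<theta>\<close>. A coalition manipulating in favour of \<open>w \<noteq> 1\<close> can
  only take weight from rankings preferring \<open>w\<close> to 1. If 1 still reaches the runoff, it wins it.
  Otherwise both finalists have at least the plurality score of 1, and together with the rankings
  that prefer 1 to \<open>w\<close> and put no finalist first, whose weight does not drop either, this
  accounts for weight \<open>2(\<theta> + (1 - \<theta>)/m) + \<theta> + (1 - \<theta>)(m - 1)/(2m)\<close>, which exceeds the total
  exactly when \<open>\<theta> > (m - 3)/(5m - 3)\<close>. Below that threshold, moving the weight of the rankings
  preferring 2 to 1 onto \<open>2 \<succ> 3 \<succ> \<dots> \<succ> m \<succ> 1\<close> and \<open>3 \<succ> \<dots> \<succ> m \<succ> 1 \<succ> 2\<close> makes 2 and 3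
  the finalists, and 2 wins the runoff.
\<close>

section \<open>Relative position in a ranking\<close>

lemma prefers_Nil [simp]: "\<not> prefers [] a b"
  by (simp add: prefers_def)

lemma prefers_Cons: "prefers (x # xs) a b \<longleftrightarrow> x = a \<and> b \<in> set xs \<or> prefers xs a b"
proof
  assume "prefers (x # xs) a b"
  then obtain i j where ij: "i < j" "j < Suc (length xs)" "(x # xs) ! i = a" "(x # xs) ! j = b"
    by (auto simp: prefers_def)
  then obtain j' where j': "j = Suc j'" by (cases j) auto
  show "x = a \<and> b \<in> set xs \<or> prefers xs a b"
  proof (cases i)
    case 0
    then show ?thesis using ij j' by auto
  next
    case (Suc i')
    then show ?thesis using ij j' unfolding prefers_def by auto
  qed
next
  assume "x = a \<and> b \<in> set xs \<or> prefers xs a b"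
  then show "prefers (x # xs) a b"
  proof
    assume "x = a \<and> b \<in> set xs"
    then obtain j where "j < length xs" "xs ! j = b" "x = a" by (auto simp: in_set_conv_nth)
    then show ?thesis unfolding prefers_def by (intro exI[of _ 0] exI[of _ "Suc j"]) auto
  next
    assume "prefers xs a b"
    then obtain i j where "i < j" "j < length xs" "xs ! i = a" "xs ! j = b"
      by (auto simp: prefers_def)
    then show ?thesis unfolding prefers_def by (intro exI[of _ "Suc i"] exI[of _ "Suc j"]) auto
  qed
qed

lemma prefers_imp_mem: "prefers p a b \<Longrightarrow> a \<in> set p \<and> b \<in> set p"
  by (induction p) (auto simp: prefers_Cons)

lemma prefers_map_inj: "inj f \<Longrightarrow> prefers (map f p) (f a) (f b) \<longleftrightarrow> prefers p a b"
  by (induction p) (auto simp: prefers_Cons inj_eq)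

lemma prefers_asym: "distinct p \<Longrightarrow> prefers p a b \<Longrightarrow> \<not> prefers p b a"
  by (induction p) (auto simp: prefers_Cons dest: prefers_imp_mem)

lemma prefers_trans: "distinct p \<Longrightarrow> prefers p a b \<Longrightarrow> prefers p b c \<Longrightarrow> prefers p a c"
  by (induction p) (auto simp: prefers_Cons dest: prefers_imp_mem)

lemma prefers_total:
  "a \<in> set p \<Longrightarrow> b \<in> set p \<Longrightarrow> a \<noteq> b \<Longrightarrow> prefers p a b \<or> prefers p b a"
  by (induction p) (auto simp: prefers_Cons)

lemma hd_filter_prefers:
  assumes "distinct p" "b \<in> K" "b \<in> set p" "b \<noteq> hd (filter (\<lambda>x. x \<in> K) p)"
  shows "prefers p (hd (filter (\<lambda>x. x \<in> K) p)) b"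
  using assms by (induction p) (auto simp: prefers_Cons)

section \<open>Counting rankings by symmetry\<close>

abbreviation id_ranking :: "nat \<Rightarrow> nat list" where
  "id_ranking m \<equiv> [1..<m+1]"

declare upt_Suc [simp del] \<comment> \<open>it would rewrite \<open>[1..<m+1]\<close> to \<open>[1..<m] @ [m]\<close>\<close>

lemma mem_rankings: "p \<in> rankings m \<longleftrightarrow> distinct p \<and> set p = {1..m}"
  by (auto simp: rankings_def permutations_of_set_def)

lemma finite_rankings [simp]: "finite (rankings m)"
  by (simp add: rankings_def)

lemma card_rankings: "card (rankings m) = fact m"
  by (simp add: rankings_def)

lemma id_ranking_mem: "id_ranking m \<in> rankings m"
  by (auto simp: mem_rankings)

lemma hd_id_ranking: "m \<ge> 1 \<Longrightarrow> hd (id_ranking m) = 1"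
  by (simp add: upt_conv_Cons)

lemma hd_ranking: "p \<in> rankings m \<Longrightarrow> m \<ge> 1 \<Longrightarrow> p \<noteq> [] \<and> hd p \<in> {1..m}"
  by (cases p) (auto simp: mem_rankings)

lemma ranking_prefers_hd:
  assumes "p \<in> rankings m" "b \<in> {1..m}" "b \<noteq> hd p"
  shows "prefers p (hd p) b"
proof -
  have "b \<in> set p"
    using assms by (simp add: mem_rankings)
  then show ?thesis
    using assms(3) by (cases p) (auto simp: prefers_Cons)
qed

lemma ranking_prefers_asym: "p \<in> rankings m \<Longrightarrow> prefers p a b \<Longrightarrow> \<not> prefers p b a"
  by (simp add: mem_rankings prefers_asym)

lemma ranking_prefers_total:
  "p \<in> rankings m \<Longrightarrow> a \<in> {1..m} \<Longrightarrow> b \<in> {1..m} \<Longrightarrow> a \<noteq> b \<Longrightarrow> prefers p a b \<or> prefers p b a"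
  by (simp add: mem_rankings prefers_total)

lemma ranking_not_prefers_iff:
  "p \<in> rankings m \<Longrightarrow> a \<in> {1..m} \<Longrightarrow> b \<in> {1..m} \<Longrightarrow> a \<noteq> b \<Longrightarrow> \<not> prefers p b a \<longleftrightarrow> prefers p a b"
  using ranking_prefers_asym ranking_prefers_total by blast

lemma card_rankings_permute:
  assumes "\<sigma> permutes {1..m}"
  shows "card {p \<in> rankings m. \<Phi> (map \<sigma> p)} = card {p \<in> rankings m. \<Phi> p}"
proof -
  have "bij_betw (map \<sigma>) (rankings m) (rankings m)"
    using permutations_of_set_image_permutes[OF assms]
      inj_on_subset[OF inj_mapI[OF permutes_inj[OF assms]] subset_UNIV]
    by (simp add: bij_betw_def rankings_def)
  then have "bij_betw (map \<sigma>) {p \<in> rankings m. \<Phi> (map \<sigma> p)} {p \<in> rankings m. \<Phi> p}"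
    by (rule bij_betw_Collect) simp
  then show ?thesis
    by (rule bij_betw_same_card)
qed

lemma card_rankings_transpose:
  "a \<in> {1..m} \<Longrightarrow> b \<in> {1..m} \<Longrightarrow>
    card {p \<in> rankings m. \<Phi> (map (transpose a b) p)} = card {p \<in> rankings m. \<Phi> p}"
  by (rule card_rankings_permute) (rule permutes_swap_id)

lemma prefers_map_transpose:
  "prefers (map (transpose a b) p) x y \<longleftrightarrow> prefers p (transpose a b x) (transpose a b y)"
  by (metis inj_transpose prefers_map_inj transpose_involutory)

lemma card_rankings_hd:
  assumes "c \<in> {1..m}"
  shows "m * card {p \<in> rankings m. hd p = c} = fact m"
proof -
  have same: "card {p \<in> rankings m. hd p = d} = card {p \<in> rankings m. hd p = 1}"
    if "d \<in> {1..m}" for d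
  proof -
    have "{p \<in> rankings m. hd (map (transpose 1 d) p) = d} = {p \<in> rankings m. hd p = 1}"
      using hd_ranking[of _ m] that by (auto simp: hd_map transpose_eq_iff)
    then show ?thesis
      using card_rankings_transpose[of 1 m d "\<lambda>p. hd p = d"] that by simp
  qed
  have "fact m = (\<Sum>p\<in>rankings m. 1::nat)"
    by (simp add: card_rankings)
  also have "\<dots> = (\<Sum>d\<in>{1..m}. \<Sum>p | p \<in> rankings m \<and> hd p = d. 1)"
    by (rule sum.group[symmetric]) (use hd_ranking assms in auto)
  also have "\<dots> = (\<Sum>d\<in>{1..m}. card {p \<in> rankings m. hd p = d})"
    by simp
  also have "\<dots> = (\<Sum>d\<in>{1..m}. card {p \<in> rankings m. hd p = 1})"
    by (rule sum.cong[OF refl]) (rule same)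
  finally show ?thesis
    using same[OF assms] by simp
qed

lemma card_rankings_prefers_half:
  assumes "a \<in> {1..m}" "b \<in> {1..m}" "a \<noteq> b"
    and invariant: "\<And>p. \<Phi> (map (transpose a b) p) \<longleftrightarrow> \<Phi> p"
  shows "2 * card {p \<in> rankings m. \<Phi> p \<and> prefers p a b} = card {p \<in> rankings m. \<Phi> p}"
proof -
  let ?A = "{p \<in> rankings m. \<Phi> p \<and> prefers p a b}" and ?B = "{p \<in> rankings m. \<Phi> p \<and> prefers p b a}"
  have "card ?A = card ?B"
    using card_rankings_transpose[OF assms(1,2), of "\<lambda>p. \<Phi> p \<and> prefers p b a"]
    by (simp add: invariant prefers_map_transpose)
  moreover have "{p \<in> rankings m. \<Phi> p} = ?A \<union> ?B"
    using ranking_prefers_total[of _ m a b] assms by auto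
  moreover have "?A \<inter> ?B = {}"
    using ranking_prefers_asym by blast
  ultimately show ?thesis
    by (simp add: card_Un_disjoint)
qed

lemma card_rankings_prefers:
  "a \<in> {1..m} \<Longrightarrow> b \<in> {1..m} \<Longrightarrow> a \<noteq> b \<Longrightarrow> 2 * card {p \<in> rankings m. prefers p a b} = fact m"
  using card_rankings_prefers_half[of a m b "\<lambda>_. True"] by (simp add: card_rankings)

lemma card_rankings_hd_prefers:
  assumes "a \<in> {1..m}" "b \<in> {1..m}" "c \<in> {1..m}" "a \<noteq> b" "c \<noteq> a" "c \<noteq> b"
  shows "(2 * m) * card {p \<in> rankings m. hd p = c \<and> prefers p a b} = fact m"
proof -
  have "hd (map (transpose a b) p) = c \<longleftrightarrow> hd p = c" for p
    using assms by (cases p) (auto simp: transpose_eq_iff)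
  then have "2 * card {p \<in> rankings m. hd p = c \<and> prefers p a b} = card {p \<in> rankings m. hd p = c}"
    by (rule card_rankings_prefers_half[OF assms(1,2,4)])
  then have "(2 * m) * card {p \<in> rankings m. hd p = c \<and> prefers p a b} = m * card {p \<in> rankings m. hd p = c}"
    by (simp add: algebra_simps)
  with card_rankings_hd[OF assms(3)] show ?thesis
    by simp
qed

lemma card_rankings_last_of_three:
  assumes "a \<in> {1..m}" "b \<in> {1..m}" "c \<in> {1..m}" "a \<noteq> b" "a \<noteq> c" "b \<noteq> c"
  shows "3 * card {p \<in> rankings m. prefers p a b \<and> prefers p c b} = fact m"
proof -
  define bottom where "bottom x y z = {p \<in> rankings m. prefers p x y \<and> prefers p z y}" for x y z
  have "card (bottom a b c) = card (bottom b a c)"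
    using card_rankings_transpose[OF assms(1,2), of "\<lambda>p. prefers p b a \<and> prefers p c a"] assms
    by (simp add: bottom_def prefers_map_transpose)
  moreover have "card (bottom a b c) = card (bottom a c b)"
    using card_rankings_transpose[OF assms(2,3), of "\<lambda>p. prefers p a c \<and> prefers p b c"] assms
    by (simp add: bottom_def prefers_map_transpose)
  moreover have "rankings m = bottom a b c \<union> bottom b a c \<union> bottom a c b"
  proof -
    have "p \<in> bottom a b c \<union> bottom b a c \<union> bottom a c b" if p: "p \<in> rankings m" for p
    proof -
      have "prefers p a b \<or> prefers p b a" "prefers p b c \<or> prefers p c b" "prefers p a c \<or> prefers p c a"
        using ranking_prefers_total[OF p] assms by auto
      moreover have "prefers p a b \<Longrightarrow> prefers p b c \<Longrightarrow> prefers p a c"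
        "prefers p b a \<Longrightarrow> prefers p a c \<Longrightarrow> prefers p b c"
        using p prefers_trans by (auto simp: mem_rankings)
      ultimately consider "prefers p a b \<and> prefers p c b" | "prefers p b a \<and> prefers p c a"
        | "prefers p a c \<and> prefers p b c"
        by blast
      then show ?thesis
        using p unfolding bottom_def by cases simp_all
    qed
    then show ?thesis
      by (auto simp: bottom_def)
  qed
  moreover have "bottom a b c \<inter> bottom b a c = {}" "(bottom a b c \<union> bottom b a c) \<inter> bottom a c b = {}"
    using ranking_prefers_asym by (auto simp: bottom_def)
  moreover have "finite (bottom x y z)" for x y z
    by (simp add: bottom_def)
  ultimately have "card (rankings m) = 3 * card (bottom a b c)"
    by (simp add: card_Un_disjoint)
  then show ?thesis
    by (simp add: bottom_def card_rankings)
qed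

section \<open>The two rounds\<close>

lemma beats_asym: "distinct tb \<Longrightarrow> beats s tb c d \<Longrightarrow> \<not> beats s tb d c"
  by (auto simp: beats_def dest: prefers_asym)

lemma ex1_beats_all:
  assumes "distinct tb" "finite A" "A \<noteq> {}" "A \<subseteq> set tb"
  shows "\<exists>!c. c \<in> A \<and> (\<forall>d\<in>A. d \<noteq> c \<longrightarrow> beats s tb c d)"
proof -
  define C where "C = {c \<in> A. s c = Max (s ` A)}"
  define c where "c = hd (filter (\<lambda>x. x \<in> C) tb)"
  have "C \<noteq> {}"
    using Max_in[of "s ` A"] assms(2,3) unfolding C_def by fastforce
  then have "filter (\<lambda>x. x \<in> C) tb \<noteq> []"
    using assms(4) unfolding C_def by (auto simp: filter_empty_conv)
  then have "c \<in> C"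
    unfolding c_def using hd_in_set by fastforce
  then have "c \<in> A"
    by (simp add: C_def)
  have c_beats: "beats s tb c d" if "d \<in> A" "d \<noteq> c" for d
  proof (cases "d \<in> C")
    case True
    then have "prefers tb c d"
      using hd_filter_prefers[OF assms(1) True, folded c_def] that assms(4) by blast
    then show ?thesis
      using True \<open>c \<in> C\<close> by (simp add: beats_def C_def)
  next
    case False
    moreover have "s d \<le> Max (s ` A)"
      using that(1) assms(2) by simp
    ultimately have "s d < s c"
      using that(1) \<open>c \<in> C\<close> by (simp add: C_def)
    then show ?thesis
      by (simp add: beats_def)
  qed
  show ?thesis
  proof (rule ex1I[of _ c])
    show "c \<in> A \<and> (\<forall>d\<in>A. d \<noteq> c \<longrightarrow> beats s tb c d)"
      using \<open>c \<in> A\<close> c_beats by simp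
  next
    fix c' assume "c' \<in> A \<and> (\<forall>d\<in>A. d \<noteq> c' \<longrightarrow> beats s tb c' d)"
    then show "c' = c"
      using \<open>c \<in> A\<close> c_beats beats_asym[OF assms(1), of s c c'] by (cases "c' = c") auto
  qed
qed

lemma first_cand_beats:
  assumes "tb \<in> rankings m" "m \<ge> 1"
  shows "first_cand m tb P \<in> {1..m} \<and>
    (\<forall>d\<in>{1..m}. d \<noteq> first_cand m tb P \<longrightarrow> beats (plu (rankings m) P) tb (first_cand m tb P) d)"
  unfolding first_cand_def by (rule theI'[OF ex1_beats_all]) (use assms in \<open>auto simp: mem_rankings\<close>)

lemma second_cand_beats:
  fixes P :: "nat list \<Rightarrow> real"
  assumes "tb \<in> rankings m" "m \<ge> 2"
  defines "A \<equiv> {1..m} - {first_cand m tb P}"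
  shows "second_cand m tb P \<in> A \<and>
    (\<forall>d\<in>A. d \<noteq> second_cand m tb P \<longrightarrow> beats (plu (rankings m) P) tb (second_cand m tb P) d)"
proof -
  let ?beats = "beats (plu (rankings m) P) tb"
  have "(if first_cand m tb P = 1 then 2 else 1) \<in> A"
    using assms(2) unfolding A_def by auto
  then have "A \<noteq> {}"
    by blast
  moreover have "distinct tb" "A \<subseteq> set tb"
    using assms(1) unfolding A_def by (auto simp: mem_rankings)
  ultimately have ex1: "\<exists>!c. c \<in> A \<and> (\<forall>d\<in>A. d \<noteq> c \<longrightarrow> ?beats c d)"
    by (intro ex1_beats_all) (simp_all add: A_def)
  have eq: "c \<in> {1..m} \<and> c \<noteq> first_cand m tb P \<and>
      (\<forall>d\<in>{1..m}. d \<noteq> c \<and> d \<noteq> first_cand m tb P \<longrightarrow> ?beats c d)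
    \<longleftrightarrow> c \<in> A \<and> (\<forall>d\<in>A. d \<noteq> c \<longrightarrow> ?beats c d)" for c
    unfolding A_def by auto
  show ?thesis
    unfolding second_cand_def eq by (rule theI'[OF ex1])
qed

definition finalists :: "nat \<Rightarrow> nat list \<Rightarrow> (nat list \<Rightarrow> real) \<Rightarrow> nat set" where
  "finalists m tb P = {first_cand m tb P, second_cand m tb P}"

lemma finalists_subset: "tb \<in> rankings m \<Longrightarrow> m \<ge> 2 \<Longrightarrow> finalists m tb P \<subseteq> {1..m}"
  using first_cand_beats[of tb m P] second_cand_beats[of tb m P] by (simp add: finalists_def)

lemma card_finalists: "tb \<in> rankings m \<Longrightarrow> m \<ge> 2 \<Longrightarrow> card (finalists m tb P) = 2"
  using second_cand_beats[of tb m P] by (simp add: finalists_def)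

lemma ex_other_finalist: "tb \<in> rankings m \<Longrightarrow> m \<ge> 2 \<Longrightarrow> \<exists>b\<in>finalists m tb P. b \<noteq> a"
  using second_cand_beats[of tb m P] by (auto simp: finalists_def)

lemma plu_le_finalist:
  assumes "tb \<in> rankings m" "m \<ge> 2" "c \<in> finalists m tb P" "d \<in> {1..m} - finalists m tb P"
  shows "plu (rankings m) P d \<le> plu (rankings m) P c"
proof -
  have "beats (plu (rankings m) P) tb c d"
  proof (cases "c = first_cand m tb P")
    case True
    then show ?thesis
      using first_cand_beats[of tb m P] assms(1,2,4) by (simp add: finalists_def)
  next
    case False
    then have "c = second_cand m tb P"
      using assms(3) by (simp add: finalists_def)
    then show ?thesis
      using second_cand_beats[of tb m P] assms(1,2,4) by (simp add: finalists_def)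
  qed
  then show ?thesis
    by (auto simp: beats_def)
qed

lemma finalist_if_plu_gt:
  "tb \<in> rankings m \<Longrightarrow> m \<ge> 2 \<Longrightarrow> c \<in> finalists m tb P \<Longrightarrow> a \<in> {1..m} \<Longrightarrow>
    plu (rankings m) P c < plu (rankings m) P a \<Longrightarrow> a \<in> finalists m tb P"
  using plu_le_finalist[of tb m c P a] by fastforce

lemma finalists_eq_if_plu_gt:
  assumes "tb \<in> rankings m" "m \<ge> 2" "a \<in> {1..m}" "b \<in> {1..m}" "a \<noteq> b"
    and top: "\<And>c. c \<in> {1..m} - {a, b} \<Longrightarrow>
      plu (rankings m) P c < plu (rankings m) P a \<and> plu (rankings m) P c < plu (rankings m) P b"
  shows "finalists m tb P = {a, b}"
proof -
  have "finalists m tb P \<subseteq> {a, b}"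
  proof
    fix c assume c: "c \<in> finalists m tb P"
    show "c \<in> {a, b}"
    proof (rule ccontr)
      assume "c \<notin> {a, b}"
      moreover have "c \<in> {1..m}"
        using c finalists_subset[OF assms(1,2)] by blast
      ultimately have "a \<in> finalists m tb P" "b \<in> finalists m tb P"
        using finalist_if_plu_gt[OF assms(1,2) c] assms(3,4) top by auto
      then have "{a, b, c} \<subseteq> finalists m tb P"
        using c by blast
      moreover have "finite (finalists m tb P)"
        by (simp add: finalists_def)
      ultimately have "card {a, b, c} \<le> 2"
        using card_finalists[OF assms(1,2), of P] card_mono by metis
      then show False
        using \<open>c \<notin> {a, b}\<close> assms(5) by simp
    qed
  qed
  moreover have "card (finalists m tb P) = card {a, b}"
    using card_finalists[OF assms(1,2)] assms(5) by simp
  ultimately show ?thesis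
    by (simp add: card_subset_eq)
qed

lemma sum_le_total:
  fixes Q :: "nat list \<Rightarrow> real"
  shows "\<forall>p. 0 \<le> Q p \<Longrightarrow> S \<subseteq> rankings m \<Longrightarrow> sum Q S \<le> total m Q"
  unfolding total_def by (rule sum_mono2) auto

lemma plu_twice_add_sum_le_total:
  fixes Q :: "nat list \<Rightarrow> real"
  assumes "tb \<in> rankings m" "m \<ge> 2" "\<forall>p. 0 \<le> Q p" "a \<in> {1..m} - finalists m tb Q"
    and S: "S \<subseteq> {p \<in> rankings m. hd p \<notin> finalists m tb Q}"
  shows "2 * plu (rankings m) Q a + sum Q S \<le> total m Q"
proof -
  let ?R = "rankings m" and ?f = "first_cand m tb Q" and ?g = "second_cand m tb Q"
  have fg: "finalists m tb Q = {?f, ?g}" "?f \<noteq> ?g"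
    using second_cand_beats[OF assms(1,2), of Q] by (auto simp: finalists_def)
  have "plu ?R Q a \<le> plu ?R Q ?f" "plu ?R Q a \<le> plu ?R Q ?g"
    using plu_le_finalist[OF assms(1,2) _ assms(4)] fg(1) by auto
  moreover have "plu ?R Q ?f + plu ?R Q ?g + sum Q S
      = sum Q ({p \<in> ?R. hd p = ?f} \<union> {p \<in> ?R. hd p = ?g} \<union> S)"
    unfolding plu_def using fg S finite_subset[OF S] by (subst sum.union_disjoint, auto)+
  moreover have "\<dots> \<le> total m Q"
    by (rule sum_le_total) (use assms(3) S in auto)
  ultimately show ?thesis
    by linarith
qed

text \<open>By \<open>plu_restr_pair\<close> below, \<open>pref_weight m P a b\<close> is the score of \<open>a\<close> in a runoff against \<open>b\<close>.\<close>

definition pref_weight :: "nat \<Rightarrow> (nat list \<Rightarrow> real) \<Rightarrow> nat \<Rightarrow> nat \<Rightarrow> real" where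
  "pref_weight m P a b = (\<Sum>p\<in>{p \<in> rankings m. prefers p a b}. P p)"

lemma pref_weight_add_swap:
  assumes "a \<in> {1..m}" "b \<in> {1..m}" "a \<noteq> b"
  shows "pref_weight m P a b + pref_weight m P b a = total m P"
proof -
  let ?A = "{p \<in> rankings m. prefers p a b}" and ?B = "{p \<in> rankings m. prefers p b a}"
  have "rankings m = ?A \<union> ?B"
    using ranking_prefers_total[of _ m a b] assms by auto
  then have "total m P = sum P (?A \<union> ?B)"
    unfolding total_def by (rule arg_cong)
  also have "\<dots> = sum P ?A + sum P ?B"
    by (rule sum.union_disjoint) (use ranking_prefers_asym in auto)
  finally show ?thesis
    unfolding pref_weight_def by simp
qed

lemma hd_filter_pair:
  assumes "p \<in> rankings m" "a \<in> {1..m}" "b \<in> {1..m}" "a \<noteq> b"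
  shows "hd (filter (\<lambda>x. x \<in> {a, b}) p) = a \<longleftrightarrow> prefers p a b"
proof -
  let ?h = "hd (filter (\<lambda>x. x \<in> {a, b}) p)"
  have p: "distinct p" "a \<in> set p" "b \<in> set p"
    using assms by (auto simp: mem_rankings)
  then have "filter (\<lambda>x. x \<in> {a, b}) p \<noteq> []"
    by (auto simp: filter_empty_conv)
  then have "?h \<in> {a, b}"
    using hd_in_set by fastforce
  then show ?thesis
    using hd_filter_prefers[OF p(1), of a "{a, b}"] hd_filter_prefers[OF p(1), of b "{a, b}"] p
      assms(4) prefers_asym[OF p(1)] by auto
qed

lemma plu_restr_pair:
  assumes "a \<in> {1..m}" "b \<in> {1..m}" "a \<noteq> b"
  shows "plu (permutations_of_set {a, b}) (restr m {a, b} P) a = pref_weight m P a b"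
proof -
  let ?f = "filter (\<lambda>x. x \<in> {a, b})"
  let ?S = "{p \<in> rankings m. hd (?f p) = a}"
  have "plu (permutations_of_set {a, b}) (restr m {a, b} P) a
      = (\<Sum>q\<in>{q \<in> permutations_of_set {a, b}. hd q = a}. \<Sum>p | p \<in> ?S \<and> ?f p = q. P p)"
    unfolding plu_def restr_def by (intro sum.cong refl arg_cong[where f = "\<lambda>S. sum P S"]) auto
  also have "\<dots> = (\<Sum>p\<in>?S. P p)"
  proof (rule sum.group)
    show "?f ` ?S \<subseteq> {q \<in> permutations_of_set {a, b}. hd q = a}"
      using assms by (auto simp: mem_rankings permutations_of_set_def)
  qed simp_all
  also have "?S = {p \<in> rankings m. prefers p a b}"
    using hd_filter_pair[of _ m a b] assms by auto
  finally show ?thesis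
    unfolding pref_weight_def .
qed

lemma trs_in_finalists: "trs m tb P \<in> finalists m tb P"
  by (simp add: trs_def finalists_def Let_def)

lemma pref_weight_finalist_le_trs:
  assumes "tb \<in> rankings m" "m \<ge> 2" "c \<in> finalists m tb P"
  shows "pref_weight m P c (trs m tb P) \<le> pref_weight m P (trs m tb P) c"
proof -
  define f g where "f = first_cand m tb P" and "g = second_cand m tb P"
  have fg: "f \<in> {1..m}" "g \<in> {1..m}" "f \<noteq> g"
    using first_cand_beats[OF assms(1), of P] second_cand_beats[OF assms(1,2), of P] assms(2)
    unfolding f_def g_def by auto
  let ?s = "plu (permutations_of_set {f, g}) (restr m {f, g} P)"
  have "?s f = pref_weight m P f g" "?s g = pref_weight m P g f"
    using plu_restr_pair[of f m g P] plu_restr_pair[of g m f P] fg by (simp_all add: insert_commute)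
  moreover have "trs m tb P = (if beats ?s tb f g then f else g)"
    by (simp add: trs_def f_def g_def Let_def)
  moreover have "c = f \<or> c = g"
    using assms(3) by (simp add: finalists_def f_def g_def)
  ultimately show ?thesis
    by (cases "beats ?s tb f g") (auto simp: beats_def)
qed

lemma trs_eq_finalist:
  assumes "tb \<in> rankings m" "m \<ge> 2" "a \<in> finalists m tb P" "b \<in> finalists m tb P" "a \<noteq> b"
    and "pref_weight m P b a < pref_weight m P a b"
  shows "trs m tb P = a"
proof (rule ccontr)
  assume "trs m tb P \<noteq> a"
  then have "trs m tb P = b"
    using trs_in_finalists[of m tb P] assms(3-5) by (auto simp: finalists_def)
  then show False
    using pref_weight_finalist_le_trs[OF assms(1-3)] assms(6) by simp
qed

section \<open>The expected profile\<close>

lemma prefers_id_ranking: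
  assumes "a \<in> {1..m}" "b \<in> {1..m}"
  shows "prefers (id_ranking m) a b \<longleftrightarrow> a < b"
proof
  assume "prefers (id_ranking m) a b"
  then show "a < b"
    by (auto simp: prefers_def)
next
  assume "a < b"
  then show "prefers (id_ranking m) a b"
    using assms unfolding prefers_def by (intro exI[of _ "a - 1"] exI[of _ "b - 1"]) auto
qed

lemma hatP_nonneg: "0 \<le> \<theta> \<Longrightarrow> \<theta> \<le> 1 \<Longrightarrow> 0 \<le> hatP m \<theta> p"
  by (simp add: hatP_def)

lemma sum_hatP:
  assumes "S \<subseteq> rankings m" "k * card S = fact m" "k > 0"
  shows "sum (hatP m \<theta>) S = (1 - \<theta>) / k + (if id_ranking m \<in> S then \<theta> else 0)"
proof -
  have "sum (hatP m \<theta>) S = (\<Sum>p\<in>S. (1 - \<theta>) / fact m + (if p = id_ranking m then \<theta> else 0))"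
    using assms(1) by (intro sum.cong) (auto simp: hatP_def)
  also have "\<dots> = card S * ((1 - \<theta>) / fact m) + (if id_ranking m \<in> S then \<theta> else 0)"
    using finite_subset[OF assms(1)] by (simp add: sum.distrib)
  also have "card S * ((1 - \<theta>) / fact m) = (1 - \<theta>) / k"
  proof -
    have "(fact m :: real) = real k * real (card S)"
      by (metis assms(2) of_nat_fact of_nat_mult)
    moreover have "(fact m :: real) > 0"
      by simp
    ultimately show ?thesis
      using assms(3) by (auto simp: divide_simps)
  qed
  finally show ?thesis .
qed

lemma total_hatP: "total m (hatP m \<theta>) = 1"
  using sum_hatP[of "rankings m" m 1 \<theta>] id_ranking_mem[of m] by (simp add: total_def card_rankings)

lemma plu_hatP:
  assumes "c \<in> {1..m}"
  shows "plu (rankings m) (hatP m \<theta>) c = (1 - \<theta>) / m + (if c = 1 then \<theta> else 0)"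
  unfolding plu_def
  by (subst sum_hatP[where k = m]) (use assms card_rankings_hd hd_id_ranking id_ranking_mem in auto)

lemma pref_weight_hatP:
  assumes "a \<in> {1..m}" "b \<in> {1..m}" "a \<noteq> b"
  shows "pref_weight m (hatP m \<theta>) a b = (1 - \<theta>) / 2 + (if a < b then \<theta> else 0)"
  unfolding pref_weight_def
  by (subst sum_hatP[where k = 2]) (use assms card_rankings_prefers prefers_id_ranking id_ranking_mem in auto)

lemma sum_hatP_prefers_one_not_hd:
  assumes "w \<in> {1..m}" "x \<in> {1..m}" "w \<noteq> 1" "x \<noteq> 1" "w \<noteq> x"
  shows "sum (hatP m \<theta>) {p \<in> rankings m. hd p \<notin> {w, x} \<and> prefers p 1 w}
    = \<theta> + (1 - \<theta>) / 2 - (1 - \<theta>) / (2 * real m)"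
proof -
  let ?Z = "{p \<in> rankings m. hd p \<notin> {w, x} \<and> prefers p 1 w}"
  let ?Y = "{p \<in> rankings m. hd p = x \<and> prefers p 1 w}"
  have one: "1 \<in> {1..m}"
    using assms(1) by simp
  have "hd p \<noteq> w" if "p \<in> rankings m" "prefers p 1 w" for p
    using that ranking_prefers_hd[OF that(1) one] ranking_prefers_asym[OF that(1)] by metis
  then have "{p \<in> rankings m. prefers p 1 w} = ?Z \<union> ?Y"
    by auto
  moreover have "?Z \<inter> ?Y = {}"
    by auto
  ultimately have "pref_weight m (hatP m \<theta>) 1 w = sum (hatP m \<theta>) ?Z + sum (hatP m \<theta>) ?Y"
    unfolding pref_weight_def by (simp add: sum.union_disjoint)
  moreover have "sum (hatP m \<theta>) ?Y = (1 - \<theta>) / (2 * real m)"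
    by (subst sum_hatP[where k = "2 * m"])
      (use assms card_rankings_hd_prefers[OF one assms(1,2)] hd_id_ranking in auto)
  moreover have "pref_weight m (hatP m \<theta>) 1 w = (1 - \<theta>) / 2 + \<theta>"
    using pref_weight_hatP[OF one assms(1)] assms(1,3) by simp
  ultimately show ?thesis
    by simp
qed

section \<open>No manipulation near the expected profile above the threshold\<close>

lemma abs_sum_diff_le:
  fixes P Q :: "nat list \<Rightarrow> real"
  assumes near: "\<forall>p\<in>rankings m. \<bar>P p - Q p\<bar> < \<epsilon>" and "S \<subseteq> rankings m"
  shows "\<bar>sum P S - sum Q S\<bar> \<le> fact m * \<epsilon>"
proof -
  have "\<bar>P (id_ranking m) - Q (id_ranking m)\<bar> < \<epsilon>"
    using near id_ranking_mem by blast
  then have "0 \<le> \<epsilon>"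
    by linarith
  have "\<bar>sum P S - sum Q S\<bar> \<le> (\<Sum>p\<in>S. \<bar>P p - Q p\<bar>)"
    by (metis sum_abs sum_subtractf)
  also have "\<dots> \<le> card S * \<epsilon>"
    using sum_bounded_above[of S "\<lambda>p. \<bar>P p - Q p\<bar>" \<epsilon>] near assms(2) by (fastforce intro: less_imp_le)
  also have "\<dots> \<le> fact m * \<epsilon>"
  proof -
    have "card S \<le> fact m"
      using card_mono[OF finite_rankings assms(2)] by (simp add: card_rankings)
    then have "real (card S) \<le> fact m"
      by (metis of_nat_fact of_nat_le_iff)
    then show ?thesis
      using \<open>0 \<le> \<epsilon>\<close> by (rule mult_right_mono)
  qed
  finally show ?thesis .
qed

lemma trs_near_hatP:
  assumes "m \<ge> 2" "tb \<in> rankings m"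
    and near: "\<forall>p\<in>rankings m. \<bar>P p - hatP m \<theta> p\<bar> < \<epsilon>" and small: "3 * (fact m * \<epsilon>) < \<theta>"
  shows "trs m tb P = 1"
proof -
  let ?R = "rankings m" and ?\<delta> = "fact m * \<epsilon>"
  have plu_near: "\<bar>plu ?R P c - plu ?R (hatP m \<theta>) c\<bar> \<le> ?\<delta>" for c
    unfolding plu_def by (rule abs_sum_diff_le[OF near]) auto
  have pref_near: "\<bar>pref_weight m P a b - pref_weight m (hatP m \<theta>) a b\<bar> \<le> ?\<delta>" for a b
    unfolding pref_weight_def by (rule abs_sum_diff_le[OF near]) auto
  have one: "1 \<in> {1..m}"
    using assms(1) by simp
  obtain c where c: "c \<in> finalists m tb P" "c \<noteq> 1"
    using ex_other_finalist[OF assms(2,1)] by blast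
  then have "c \<in> {1..m}"
    using finalists_subset[OF assms(2,1)] by blast
  then have "plu ?R P c < plu ?R P 1"
    using plu_near[of c] plu_near[of 1] plu_hatP[of c m \<theta>] plu_hatP[OF one, of \<theta>] c(2) small by auto
  then have "1 \<in> finalists m tb P"
    using finalist_if_plu_gt[OF assms(2,1) c(1) one] by blast
  moreover have "pref_weight m P c 1 < pref_weight m P 1 c"
  proof -
    have "1 < c"
      using c(2) \<open>c \<in> {1..m}\<close> by simp
    then have "pref_weight m (hatP m \<theta>) c 1 = (1 - \<theta>) / 2"
      "pref_weight m (hatP m \<theta>) 1 c = (1 - \<theta>) / 2 + \<theta>"
      using pref_weight_hatP[OF \<open>c \<in> {1..m}\<close> one c(2)] pref_weight_hatP[OF one \<open>c \<in> {1..m}\<close>] by auto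
    then show ?thesis
      using pref_near[of c 1] pref_near[of 1 c] small by linarith
  qed
  ultimately show ?thesis
    using trs_eq_finalist[OF assms(2,1) _ c(1)] c(2) by blast
qed

lemma trs_ne_if_one_in_finalists:
  assumes "m \<ge> 2" "tb \<in> rankings m"
    and near: "\<forall>p\<in>rankings m. \<bar>P p - hatP m \<theta> p\<bar> < \<epsilon>" and small: "3 * (fact m * \<epsilon>) < \<theta>"
    and gain: "\<forall>p\<in>rankings m. prefers p 1 w \<longrightarrow> P p \<le> Q p"
    and "total m Q = total m P" "w \<in> {1..m}" "w \<noteq> 1" "1 \<in> finalists m tb Q"
  shows "trs m tb Q \<noteq> w"
proof
  assume "trs m tb Q = w"
  then have "pref_weight m Q 1 w \<le> pref_weight m Q w 1"
    using pref_weight_finalist_le_trs[OF assms(2,1,9)] by simp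
  moreover have "pref_weight m Q 1 w + pref_weight m Q w 1 = total m P"
    using pref_weight_add_swap[of 1 m w Q] assms(1,6-8) by simp
  moreover have "pref_weight m P 1 w \<le> pref_weight m Q 1 w"
    unfolding pref_weight_def using gain by (intro sum_mono) auto
  moreover have "\<bar>pref_weight m P 1 w - pref_weight m (hatP m \<theta>) 1 w\<bar> \<le> fact m * \<epsilon>"
    unfolding pref_weight_def by (rule abs_sum_diff_le[OF near]) auto
  moreover have "pref_weight m (hatP m \<theta>) 1 w = 1 / 2 + \<theta> / 2"
    using pref_weight_hatP[of 1 m w] assms(1,7,8) by (simp add: field_simps)
  moreover have "\<bar>total m P - total m (hatP m \<theta>)\<bar> \<le> fact m * \<epsilon>"
    unfolding total_def by (rule abs_sum_diff_le[OF near]) auto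
  ultimately show False
    using total_hatP[of m \<theta>] small by linarith
qed

lemma one_in_finalists_near_hatP:
  assumes "m \<ge> 2" "tb \<in> rankings m"
    and near: "\<forall>p\<in>rankings m. \<bar>P p - hatP m \<theta> p\<bar> < \<epsilon>"
    and small: "4 * (fact m * \<epsilon>) < (\<theta> * (5 * real m - 3) - (real m - 3)) / (2 * real m)"
    and gain: "\<forall>p\<in>rankings m. prefers p 1 w \<longrightarrow> P p \<le> Q p"
    and "\<forall>p. 0 \<le> Q p" "total m Q = total m P" "w \<in> finalists m tb Q"
  shows "1 \<in> finalists m tb Q"
proof (rule ccontr)
  assume out: "1 \<notin> finalists m tb Q"
  let ?R = "rankings m" and ?\<delta> = "fact m * \<epsilon>"
  obtain x where x: "x \<in> finalists m tb Q" "x \<noteq> w"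
    using ex_other_finalist[OF assms(2,1)] by blast
  have fin: "finalists m tb Q = {w, x}"
    using card_finalists[OF assms(2,1), of Q] assms(8) x by (auto simp: card_2_iff)
  have wx: "w \<in> {1..m}" "x \<in> {1..m}" "w \<noteq> 1" "x \<noteq> 1"
    using finalists_subset[OF assms(2,1), of Q] fin out by auto
  have one: "1 \<in> {1..m}"
    using assms(1) by simp
  let ?Z = "{p \<in> ?R. hd p \<notin> {w, x} \<and> prefers p 1 w}"
  have "2 * plu ?R Q 1 + sum Q ?Z \<le> total m Q"
    by (rule plu_twice_add_sum_le_total[OF assms(2,1,6)]) (use one out fin in auto)
  moreover have "plu ?R P 1 \<le> plu ?R Q 1"
  proof -
    have "P p \<le> Q p" if "p \<in> ?R" "hd p = 1" for p
      using gain ranking_prefers_hd[OF that(1) wx(1)] that wx(3) by simp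
    then show ?thesis
      unfolding plu_def by (intro sum_mono) auto
  qed
  moreover have "sum P ?Z \<le> sum Q ?Z"
    using gain by (intro sum_mono) auto
  moreover have "(1 - \<theta>) / m + \<theta> - ?\<delta> \<le> plu ?R P 1"
    using abs_sum_diff_le[OF near, of "{p \<in> ?R. hd p = 1}"] plu_hatP[OF one, of \<theta>] by (simp add: plu_def)
  moreover have "\<theta> + (1 - \<theta>) / 2 - (1 - \<theta>) / (2 * real m) - ?\<delta> \<le> sum P ?Z"
    using abs_sum_diff_le[OF near, of ?Z] sum_hatP_prefers_one_not_hd[OF wx(1,2,3,4) x(2)[symmetric], of \<theta>]
    by simp
  moreover have "total m P \<le> 1 + ?\<delta>"
    using abs_sum_diff_le[OF near, of ?R] total_hatP[of m \<theta>] by (simp add: total_def)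
  moreover have "(\<theta> * (5 * real m - 3) - (real m - 3)) / (2 * real m)
      = 2 * ((1 - \<theta>) / m + \<theta>) + (\<theta> + (1 - \<theta>) / 2 - (1 - \<theta>) / (2 * real m)) - 1"
    using assms(1) by (simp add: field_simps)
  ultimately show False
    using small assms(7) by argo
qed

lemma not_CM_near_hatP:
  assumes "m \<ge> 2" "tb \<in> rankings m"
    and near: "\<forall>p\<in>rankings m. \<bar>P p - hatP m \<theta> p\<bar> < \<epsilon>"
    and small: "3 * (fact m * \<epsilon>) < \<theta>"
      "4 * (fact m * \<epsilon>) < (\<theta> * (5 * real m - 3) - (real m - 3)) / (2 * real m)"
  shows "\<not> CM m tb P"
proof
  assume "CM m tb P"
  then obtain Q where Q: "is_profile m Q" "total m Q = total m P" "trs m tb Q \<noteq> 1"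
    and moved: "\<forall>p\<in>rankings m. Q p < P p \<longrightarrow> prefers p (trs m tb Q) 1"
    using trs_near_hatP[OF assms(1,2) near small(1)] unfolding CM_def by auto
  define w where "w = trs m tb Q"
  have w: "w \<in> finalists m tb Q" "w \<noteq> 1"
    using trs_in_finalists[of m tb Q] Q(3) by (simp_all add: w_def)
  then have "w \<in> {1..m}"
    using finalists_subset[OF assms(2,1), of Q] by blast
  have gain: "\<forall>p\<in>rankings m. prefers p 1 w \<longrightarrow> P p \<le> Q p"
    using moved ranking_prefers_asym unfolding w_def by force
  have "\<forall>p. 0 \<le> Q p"
    using Q(1) by (simp add: is_profile_def)
  then have "1 \<in> finalists m tb Q"
    using one_in_finalists_near_hatP[OF assms(1,2) near small(2) gain] Q(2) w(1) by blast
  then have "trs m tb Q \<noteq> w"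
    using trs_ne_if_one_in_finalists[OF assms(1,2) near small(1) gain Q(2) \<open>w \<in> {1..m}\<close> w(2)] by blast
  then show False
    by (simp add: w_def)
qed

lemma above_threshold_iff:
  "m \<ge> 3 \<Longrightarrow> (real m - 3) / (5 * real m - 3) < \<theta> \<longleftrightarrow> real m - 3 < \<theta> * (5 * real m - 3)"
  by (simp add: pos_divide_less_eq)

lemma not_CM_near_hatP_above_threshold:
  assumes "m \<ge> 3" "0 < \<theta>" "tb \<in> rankings m" "(real m - 3) / (5 * real m - 3) < \<theta>"
  shows "\<exists>\<epsilon>>0. \<forall>P. (\<forall>p\<in>rankings m. \<bar>P p - hatP m \<theta> p\<bar> < \<epsilon>) \<longrightarrow> \<not> CM m tb P"
proof -
  define margin where "margin = (\<theta> * (5 * real m - 3) - (real m - 3)) / (2 * real m)"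
  define \<epsilon> where "\<epsilon> = min \<theta> margin / (8 * fact m)"
  have "0 < margin"
    unfolding margin_def using assms above_threshold_iff[OF assms(1)] by (intro divide_pos_pos) auto
  then have "0 < \<epsilon>" "3 * (fact m * \<epsilon>) < \<theta>" "4 * (fact m * \<epsilon>) < margin"
    unfolding \<epsilon>_def using assms(2) by (auto simp: min_def)
  moreover have "\<not> CM m tb P" if "\<forall>p\<in>rankings m. \<bar>P p - hatP m \<theta> p\<bar> < \<epsilon>" for P
    by (rule not_CM_near_hatP[OF _ assms(3) that]) (use assms(1) \<open>3 * (fact m * \<epsilon>) < \<theta>\<close>
      \<open>4 * (fact m * \<epsilon>) < margin\<close> in \<open>simp_all add: margin_def\<close>)
  ultimately show ?thesis
    by blast
qed

section \<open>A manipulation below the threshold\<close>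

abbreviation rot1 :: "nat \<Rightarrow> nat list" where
  "rot1 m \<equiv> 2 # [3..<m+1] @ [1]"

abbreviation rot2 :: "nat \<Rightarrow> nat list" where
  "rot2 m \<equiv> [3..<m+1] @ [1, 2]"

lemma rot1_mem: "m \<ge> 2 \<Longrightarrow> rot1 m \<in> rankings m"
  by (auto simp: mem_rankings)

lemma rot2_mem: "m \<ge> 2 \<Longrightarrow> rot2 m \<in> rankings m"
  by (auto simp: mem_rankings)

lemma hd_rot2: "m \<ge> 3 \<Longrightarrow> hd (rot2 m) = 3"
  by (simp add: upt_conv_Cons)

lemma prefers_rot1: "m \<ge> 3 \<Longrightarrow> prefers (rot1 m) 2 3"
  by (simp add: prefers_Cons)

lemma prefers_rot2: "m \<ge> 3 \<Longrightarrow> prefers (rot2 m) 3 2"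
  using ranking_prefers_hd[OF rot2_mem, of m 2] hd_rot2[of m] by simp

lemma manipQ_eq:
  assumes "\<theta> < 1"
  shows "manipQ m \<theta> p = (if prefers p 2 1 then 0 else hatP m \<theta> p)
    + (if p = rot1 m then (1 - 2 * \<theta>) / 3 else 0) + (if p = rot2 m then (1 + \<theta>) / 6 else 0)"
proof -
  have "1 - \<theta> \<noteq> 0"
    using assms by simp
  then have "(1 - \<theta>) / 2 * (2 * (1 - 2 * \<theta>) / (3 * (1 - \<theta>))) = (1 - 2 * \<theta>) / 3"
    "(1 - \<theta>) / 2 * ((1 + \<theta>) / (3 * (1 - \<theta>))) = (1 + \<theta>) / 6"
    by (simp_all add: field_simps)
  then show ?thesis
    by (simp add: manipQ_def)
qed

lemma sum_manipQ:
  assumes "\<theta> < 1" "m \<ge> 2" "S \<subseteq> rankings m"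
  shows "sum (manipQ m \<theta>) S = sum (hatP m \<theta>) {p \<in> S. prefers p 1 2}
    + (if rot1 m \<in> S then (1 - 2 * \<theta>) / 3 else 0) + (if rot2 m \<in> S then (1 + \<theta>) / 6 else 0)"
proof -
  have fin: "finite S"
    using finite_subset[OF assms(3)] by simp
  have "(\<Sum>p\<in>S. if prefers p 2 1 then 0 else hatP m \<theta> p) = (\<Sum>p\<in>S. if prefers p 1 2 then hatP m \<theta> p else 0)"
    using ranking_not_prefers_iff[of _ m 1 2] assms(2,3) by (intro sum.cong) auto
  also have "\<dots> = sum (hatP m \<theta>) {p \<in> S. prefers p 1 2}"
    by (rule sum.inter_filter[OF fin, symmetric])
  finally show ?thesis
    using fin by (simp add: manipQ_eq[OF assms(1)] sum.distrib)
qed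

lemma total_manipQ: "m \<ge> 3 \<Longrightarrow> \<theta> < 1 \<Longrightarrow> total m (manipQ m \<theta>) = 1"
  using sum_manipQ[of \<theta> m "rankings m"] rot1_mem[of m] rot2_mem[of m] pref_weight_hatP[of 1 m 2 \<theta>]
  by (simp add: total_def pref_weight_def field_simps)

lemma plu_manipQ:
  assumes "m \<ge> 3" "\<theta> < 1" "c \<in> {1..m}"
  shows "plu (rankings m) (manipQ m \<theta>) c = sum (hatP m \<theta>) {p \<in> rankings m. hd p = c \<and> prefers p 1 2}
    + (if c = 2 then (1 - 2 * \<theta>) / 3 else 0) + (if c = 3 then (1 + \<theta>) / 6 else 0)"
proof -
  have "{p \<in> {p \<in> rankings m. hd p = c}. prefers p 1 2} = {p \<in> rankings m. hd p = c \<and> prefers p 1 2}"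
    by auto
  moreover have "rot1 m \<in> rankings m" "rot2 m \<in> rankings m" "hd (rot2 m) = 3"
    using rot1_mem rot2_mem hd_rot2 assms(1) by auto
  ultimately show ?thesis
    unfolding plu_def using sum_manipQ[OF assms(2), of m "{p \<in> rankings m. hd p = c}"] assms(1) by auto
qed

lemma plu_manipQ_1:
  assumes "m \<ge> 3" "\<theta> < 1"
  shows "plu (rankings m) (manipQ m \<theta>) 1 = (1 - \<theta>) / m + \<theta>"
proof -
  have "prefers p 1 2" if "p \<in> rankings m" "hd p = 1" for p
    using ranking_prefers_hd[OF that(1), of 2] that assms(1) by simp
  then have "{p \<in> rankings m. hd p = 1 \<and> prefers p 1 2} = {p \<in> rankings m. hd p = 1}"
    by blast
  then show ?thesis
    using plu_manipQ[OF assms, of 1] plu_hatP[of 1 m \<theta>] assms(1) by (simp add: plu_def)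
qed

lemma plu_manipQ_2:
  assumes "m \<ge> 3" "\<theta> < 1"
  shows "plu (rankings m) (manipQ m \<theta>) 2 = (1 - 2 * \<theta>) / 3"
proof -
  have "\<not> prefers p 1 2" if "p \<in> rankings m" "hd p = 2" for p
    using ranking_prefers_hd[OF that(1), of 1] ranking_prefers_asym[OF that(1)] that assms(1) by simp
  then have empty: "{p \<in> rankings m. hd p = 2 \<and> prefers p 1 2} = {}"
    by blast
  show ?thesis
    using plu_manipQ[OF assms, of 2] assms(1) unfolding empty by simp
qed

lemma plu_manipQ_3:
  assumes "m \<ge> 3" "\<theta> < 1"
  shows "plu (rankings m) (manipQ m \<theta>) 3 = (1 - \<theta>) / (2 * real m) + (1 + \<theta>) / 6"
proof -
  have "sum (hatP m \<theta>) {p \<in> rankings m. hd p = 3 \<and> prefers p 1 2} = (1 - \<theta>) / (2 * real m)"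
    by (subst sum_hatP[where k = "2 * m"])
      (use assms(1) card_rankings_hd_prefers[of 1 m 2 3] hd_id_ranking[of m] in auto)
  then show ?thesis
    using plu_manipQ[OF assms, of 3] assms(1) by simp
qed

lemma plu_manipQ_le:
  assumes "m \<ge> 3" "0 \<le> \<theta>" "\<theta> < 1" "c \<in> {1..m} - {1, 2, 3}"
  shows "plu (rankings m) (manipQ m \<theta>) c \<le> (1 - \<theta>) / m"
proof -
  have "sum (hatP m \<theta>) {p \<in> rankings m. hd p = c \<and> prefers p 1 2} \<le> plu (rankings m) (hatP m \<theta>) c"
    unfolding plu_def by (rule sum_mono2) (use hatP_nonneg assms(2,3) in auto)
  then show ?thesis
    using plu_manipQ[OF assms(1,3), of c] plu_hatP[of c m \<theta>] assms(4) by auto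
qed

lemma pref_weight_manipQ_3_2:
  assumes "m \<ge> 3" "\<theta> < 1"
  shows "pref_weight m (manipQ m \<theta>) 3 2 = (1 - \<theta>) / 3 + (1 + \<theta>) / 6"
proof -
  have "{p \<in> {p \<in> rankings m. prefers p 3 2}. prefers p 1 2} = {p \<in> rankings m. prefers p 1 2 \<and> prefers p 3 2}"
    by auto
  moreover have "sum (hatP m \<theta>) {p \<in> rankings m. prefers p 1 2 \<and> prefers p 3 2} = (1 - \<theta>) / 3"
    by (subst sum_hatP[where k = 3])
      (use assms card_rankings_last_of_three[of 1 m 2 3] prefers_id_ranking[of 3 m 2] in auto)
  moreover have "\<not> prefers (rot1 m) 3 2" "prefers (rot2 m) 3 2" "rot2 m \<in> rankings m"
    using prefers_rot1[OF assms(1)] prefers_rot2[OF assms(1)] ranking_prefers_asym[OF rot1_mem] rot2_mem assms(1)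
    by auto
  ultimately show ?thesis
    unfolding pref_weight_def using sum_manipQ[OF assms(2), of m "{p \<in> rankings m. prefers p 3 2}"] assms(1)
    by simp
qed

lemma below_threshold_iff:
  "m \<ge> 3 \<Longrightarrow> \<theta> < (real m - 3) / (5 * real m - 3) \<longleftrightarrow> \<theta> * (5 * real m - 3) < real m - 3"
  by (simp add: pos_less_divide_eq)

lemma threshold_lt: "m \<ge> 3 \<Longrightarrow> (real m - 3) / (5 * real m - 3) < 1 / 5"
  by (simp add: divide_less_eq)

lemma trs_manipQ:
  assumes m: "m \<ge> 3" and "tb \<in> rankings m" "0 < \<theta>" and below: "\<theta> * (5 * real m - 3) < real m - 3"
  shows "trs m tb (manipQ m \<theta>) = 2"
proof -
  let ?R = "rankings m" and ?Q = "manipQ m \<theta>"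
  have "\<theta> < 1"
  proof (rule ccontr)
    assume "\<not> \<theta> < 1"
    then have "1 * (5 * real m - 3) \<le> \<theta> * (5 * real m - 3)"
      using m by (intro mult_right_mono) auto
    then show False
      using below by simp
  qed
  define gap where "gap = ((real m - 3) - \<theta> * (5 * real m - 3)) / (6 * real m)"
  have "0 < gap"
    unfolding gap_def using below m by (intro divide_pos_pos) auto
  moreover have "plu ?R ?Q 2 = (1 - \<theta>) / m + \<theta> + 2 * gap" "plu ?R ?Q 3 = (1 - \<theta>) / m + \<theta> + gap"
    unfolding gap_def using m by (simp_all add: plu_manipQ_2 plu_manipQ_3 \<open>\<theta> < 1\<close> field_simps)
  ultimately have top: "(1 - \<theta>) / m + \<theta> < plu ?R ?Q 2" "(1 - \<theta>) / m + \<theta> < plu ?R ?Q 3"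
    by simp_all
  have "plu ?R ?Q c \<le> (1 - \<theta>) / m + \<theta>" if "c \<in> {1..m} - {2, 3}" for c
    using plu_manipQ_1[OF m \<open>\<theta> < 1\<close>] plu_manipQ_le[OF m _ \<open>\<theta> < 1\<close>, of c] that \<open>0 < \<theta>\<close>
    by (cases "c = 1") auto
  then have "finalists m tb ?Q = {2, 3}"
    using top m by (intro finalists_eq_if_plu_gt[OF assms(2)]) fastforce+
  moreover have "pref_weight m ?Q 3 2 < pref_weight m ?Q 2 3"
  proof -
    have "pref_weight m ?Q 3 2 = 1 / 2 - \<theta> / 6"
      using pref_weight_manipQ_3_2[OF m \<open>\<theta> < 1\<close>] by (simp add: field_simps)
    moreover have "pref_weight m ?Q 2 3 + pref_weight m ?Q 3 2 = 1"
      using pref_weight_add_swap[of 2 m 3 ?Q] total_manipQ[OF m \<open>\<theta> < 1\<close>] m by simp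
    ultimately show ?thesis
      using \<open>0 < \<theta>\<close> by linarith
  qed
  ultimately show ?thesis
    using trs_eq_finalist[OF assms(2), of 2 ?Q 3] m by simp
qed

lemma manipQ_is_profile:
  assumes "m \<ge> 3" "0 \<le> \<theta>" "\<theta> \<le> 1 / 2"
  shows "is_profile m (manipQ m \<theta>)"
proof -
  have "0 \<le> manipQ m \<theta> p" for p
    using manipQ_eq[of \<theta> m p] hatP_nonneg[of \<theta> m p] assms(2,3) by simp
  moreover have "manipQ m \<theta> p = 0" if "p \<notin> rankings m" for p
    using that manipQ_eq[of \<theta> m p] rot1_mem[of m] rot2_mem[of m] assms(1,3) by (auto simp: hatP_def)
  ultimately show ?thesis
    using total_manipQ[of m \<theta>] assms by (simp add: is_profile_def)
qed

lemma prefers_2_1_if_manipQ_less: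
  "0 \<le> \<theta> \<Longrightarrow> \<theta> \<le> 1 / 2 \<Longrightarrow> manipQ m \<theta> p < hatP m \<theta> p \<Longrightarrow> prefers p 2 1"
  using manipQ_eq[of \<theta> m p] by (auto split: if_splits)

lemma manipQ_manipulates:
  assumes "m \<ge> 3" "0 < \<theta>" "tb \<in> rankings m" "\<theta> < (real m - 3) / (5 * real m - 3)"
  shows "is_profile m (manipQ m \<theta>) \<and> total m (manipQ m \<theta>) = total m (hatP m \<theta>) \<and>
    trs m tb (manipQ m \<theta>) = 2 \<and> (\<forall>p\<in>rankings m. manipQ m \<theta> p < hatP m \<theta> p \<longrightarrow> prefers p 2 1)"
proof -
  have "\<theta> \<le> 1 / 2"
    using assms(4) threshold_lt[OF assms(1)] by linarith
  have "is_profile m (manipQ m \<theta>)" "total m (manipQ m \<theta>) = total m (hatP m \<theta>)"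
    using manipQ_is_profile total_manipQ total_hatP assms(1,2) \<open>\<theta> \<le> 1 / 2\<close> by auto
  moreover have "trs m tb (manipQ m \<theta>) = 2"
    using trs_manipQ[OF assms(1,3,2)] assms(4) below_threshold_iff[OF assms(1)] by simp
  moreover have "\<forall>p\<in>rankings m. manipQ m \<theta> p < hatP m \<theta> p \<longrightarrow> prefers p 2 1"
    using prefers_2_1_if_manipQ_less[OF less_imp_le[OF assms(2)] \<open>\<theta> \<le> 1 / 2\<close>] by blast
  ultimately show ?thesis
    by blast
qed

theorem mainTheorem8:
  fixes m :: nat and \<theta> :: real and tb :: "nat list"
  assumes "m \<ge> 3" and "0 < \<theta>" and "\<theta> \<le> 1" and "tb \<in> rankings m"
  shows "trs m tb (hatP m \<theta>) = 1
    \<and> (\<theta> > (real m - 3) / (5 * real m - 3) \<longrightarrow>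
         \<not> CM m tb (hatP m \<theta>) \<and>
         (\<exists>\<epsilon>>0. \<forall>P. is_profile m P \<and> (\<forall>p\<in>rankings m. \<bar>P p - hatP m \<theta> p\<bar> < \<epsilon>)
                 \<longrightarrow> \<not> CM m tb P))
    \<and> (\<theta> < (real m - 3) / (5 * real m - 3) \<longrightarrow>
         CM m tb (hatP m \<theta>) \<and>
         is_profile m (manipQ m \<theta>) \<and> total m (manipQ m \<theta>) = total m (hatP m \<theta>) \<and>
         trs m tb (manipQ m \<theta>) = 2 \<and>
         (\<forall>p\<in>rankings m. manipQ m \<theta> p < hatP m \<theta> p \<longrightarrow> prefers p 2 1))"
proof -
  have trs_hatP: "trs m tb (hatP m \<theta>) = 1"
    by (rule trs_near_hatP[where \<theta> = \<theta> and \<epsilon> = "\<theta> / (6 * fact m)"]) (use assms in auto)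
  have "\<not> CM m tb (hatP m \<theta>) \<and>
      (\<exists>\<epsilon>>0. \<forall>P. is_profile m P \<and> (\<forall>p\<in>rankings m. \<bar>P p - hatP m \<theta> p\<bar> < \<epsilon>) \<longrightarrow> \<not> CM m tb P)"
    if "\<theta> > (real m - 3) / (5 * real m - 3)"
    using not_CM_near_hatP_above_threshold[OF assms(1,2,4) that] by fastforce
  moreover have "CM m tb (hatP m \<theta>)" if "\<theta> < (real m - 3) / (5 * real m - 3)"
    using manipQ_manipulates[OF assms(1,2,4) that] trs_hatP unfolding CM_def by fastforce
  ultimately show ?thesis
    using trs_hatP manipQ_manipulates[OF assms(1,2,4)] by blast
qed

end
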